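(* Let $\mathcal I$ be a Stable Marriage instance containing $r$ men $m^d_1,\dots,m^d_r$ and $r$ women $w^d_1,\dots,w^d_r$ such that for every $i\in[r]$ (indices taken modulo $r$) the preference list of $m^d_i$ begins with $w^d_i\succ w^d_{i+1}\succ\dots\succ w^d_{r+i-1}$ and the preference list of $w^d_i$ begins with $m^d_i\succ m^d_{i+1}\succ\dots\succ m^d_{r+i-1}$ (the remaining agents follow in arbitrary order). Then for every list $S$ of at most $r-1$ swap operations, every stable matching of the instance $\mathcal I[S]$ contains the pairs $\{m^d_i,w^d_i\}$ for all $i\in[r]$.
   Context: A Stable Marriage (SM) instance consists of a set $U$ of men and a set $W$ of women with $|U|=|W|=n$, and for every agent a strict total order (preference list) over all agents of the opposite gender. A matching is a set of man–woman pairs in which each agent appears at most once. A man–woman pair $\{m,w\}$ blocks a matching $M$ if ($m$ is unassigned or prefers $w$ to his partner in $M$) and ($w$ is unassigned or prefers $m$ to her partner in $M$); $M$ is stable if no pair blocks it. A swap operation exchanges two adjacent agents in the preference list of one agent (of the whole instance, possibly a non-dummy agent or a dummy agent). $\mathcal I[S]$ denotes the instance obtained by applying the swaps in the list $S$ to $\mathcal I$. *)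

theory Defs
  imports Main
begin

type_synonym 'a prefs = "'a \<Rightarrow> 'a list"

definition sm_instance :: "'a set \<Rightarrow> 'a set \<Rightarrow> 'a prefs \<Rightarrow> bool" where
  "sm_instance U W P \<longleftrightarrow> finite U \<and> finite W \<and> U \<inter> W = {} \<and> card U = card W \<and>
     (\<forall>m\<in>U. distinct (P m) \<and> set (P m) = W) \<and>
     (\<forall>w\<in>W. distinct (P w) \<and> set (P w) = U)"

definition prefers :: "'a prefs \<Rightarrow> 'a \<Rightarrow> 'a \<Rightarrow> 'a \<Rightarrow> bool" where
  "prefers P a x y \<longleftrightarrow> (\<exists>i j. i < j \<and> j < length (P a) \<and> P a ! i = x \<and> P a ! j = y)"

definition matching :: "'a set \<Rightarrow> 'a set \<Rightarrow> ('a \<times> 'a) set \<Rightarrow> bool" where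
  "matching U W M \<longleftrightarrow> M \<subseteq> U \<times> W \<and>
     (\<forall>m w w'. (m, w) \<in> M \<longrightarrow> (m, w') \<in> M \<longrightarrow> w = w') \<and>
     (\<forall>m m' w. (m, w) \<in> M \<longrightarrow> (m', w) \<in> M \<longrightarrow> m = m')"

definition blocks :: "'a prefs \<Rightarrow> ('a \<times> 'a) set \<Rightarrow> 'a \<Rightarrow> 'a \<Rightarrow> bool" where
  "blocks P M m w \<longleftrightarrow>
     ((\<forall>w'. (m, w') \<notin> M) \<or> (\<exists>w'. (m, w') \<in> M \<and> prefers P m w w')) \<and>
     ((\<forall>m'. (m', w) \<notin> M) \<or> (\<exists>m'. (m', w) \<in> M \<and> prefers P w m m'))"

definition stable :: "'a set \<Rightarrow> 'a set \<Rightarrow> 'a prefs \<Rightarrow> ('a \<times> 'a) set \<Rightarrow> bool" where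
  "stable U W P M \<longleftrightarrow> matching U W M \<and> \<not> (\<exists>m\<in>U. \<exists>w\<in>W. blocks P M m w)"

definition swap_adj :: "'a list \<Rightarrow> nat \<Rightarrow> 'a list" where
  "swap_adj xs k = xs[k := xs ! Suc k, Suc k := xs ! k]"

definition apply_swap :: "'a prefs \<Rightarrow> 'a \<times> nat \<Rightarrow> 'a prefs" where
  "apply_swap P s = (case s of (a, k) \<Rightarrow> P(a := swap_adj (P a) k))"

definition apply_swaps :: "'a prefs \<Rightarrow> ('a \<times> nat) list \<Rightarrow> 'a prefs" where
  "apply_swaps P S = foldl apply_swap P S"

text \<open>Validity of a swap list: agent of the instance, adjacent positions within the list
  (list lengths are invariant under swaps).\<close>
definition valid_swaps :: "'a set \<Rightarrow> 'a set \<Rightarrow> 'a prefs \<Rightarrow> ('a \<times> nat) list \<Rightarrow> bool" where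
  "valid_swaps U W P S \<longleftrightarrow> (\<forall>(a, k) \<in> set S. a \<in> U \<union> W \<and> Suc k < length (P a))"

end

theory Submission
  imports Defs
begin

text \<open>An adjacent swap creates at most one new inversion of a preference list, so an agent
  whose list received \<open>s\<close> swaps can have promoted an entry by at most \<open>s\<close> places. Suppose the
  dummy man \<open>m\<^sub>b\<close> is matched to a woman he now ranks above \<open>w\<^sub>b\<close>: she was \<open>k \<le> s(m\<^sub>b)\<close>
  places down his list, so she is \<open>w\<^sub>b\<^sub>+\<^sub>k\<close>. Were \<open>m\<^sub>b\<^sub>+\<^sub>k\<close> not also better off,
  stability would force \<open>w\<^sub>b\<^sub>+\<^sub>k\<close> to rank \<open>m\<^sub>b\<close> above \<open>m\<^sub>b\<^sub>+\<^sub>k\<close>, which are \<open>r - k\<close>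
  places apart in her list: \<open>r\<close> swaps in total. So the better-off dummy men are permuted by
  \<open>b \<mapsto> b + k\<^sub>b\<close>, whence the shifts \<open>k\<^sub>b\<close> add up to a positive multiple of \<open>r\<close>, again
  \<open>r\<close> swaps. Hence no dummy agent is better off than with its dummy partner, and stability
  puts every pair \<open>{m\<^sub>i, w\<^sub>i}\<close> into the matching.\<close>

definition precedes :: "'a list \<Rightarrow> 'a \<Rightarrow> 'a \<Rightarrow> bool" where
  "precedes L x y \<longleftrightarrow> (\<exists>i j. i < j \<and> j < length L \<and> L ! i = x \<and> L ! j = y)"

lemma prefers_iff_precedes: "prefers P a x y \<longleftrightarrow> precedes (P a) x y"
  by (simp add: prefers_def precedes_def)

lemma precedes_nth: "i < j \<Longrightarrow> j < length L \<Longrightarrow> precedes L (L ! i) (L ! j)"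
  unfolding precedes_def by auto

lemma precedes_in_set: "precedes L x y \<Longrightarrow> x \<in> set L \<and> y \<in> set L"
  unfolding precedes_def by auto

lemma precedes_total:
  "x \<in> set L \<Longrightarrow> y \<in> set L \<Longrightarrow> x \<noteq> y \<Longrightarrow> precedes L x y \<or> precedes L y x"
  unfolding precedes_def in_set_conv_nth by (metis linorder_neqE_nat)

lemma precedes_irrefl: "distinct L \<Longrightarrow> \<not> precedes L x x"
  unfolding precedes_def using nth_eq_iff_index_eq by fastforce

lemma precedes_trans: "distinct L \<Longrightarrow> precedes L x y \<Longrightarrow> precedes L y z \<Longrightarrow> precedes L x z"
  unfolding precedes_def by (metis dual_order.strict_trans nth_eq_iff_index_eq)

lemma precedes_asym: "distinct L \<Longrightarrow> precedes L x y \<Longrightarrow> \<not> precedes L y x"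
  using precedes_trans precedes_irrefl by metis

lemma precedes_swap_adj:
  assumes "Suc k < length L" "precedes (swap_adj L k) x y"
  shows "precedes L x y \<or> (x = L ! Suc k \<and> y = L ! k)"
proof -
  obtain i j where ij: "i < j" "j < length L" "swap_adj L k ! i = x" "swap_adj L k ! j = y"
    using assms(2) by (auto simp: precedes_def swap_adj_def)
  define \<sigma> where "\<sigma> t = (if t = k then Suc k else if t = Suc k then k else t)" for t
  have nth: "swap_adj L k ! t = L ! \<sigma> t" if "t < length L" for t
    using that assms(1) by (auto simp: swap_adj_def \<sigma>_def nth_list_update)
  have "\<sigma> i < length L" "\<sigma> j < length L" using ij assms(1) by (auto simp: \<sigma>_def)
  show ?thesis
  proof (cases "\<sigma> i < \<sigma> j")
    case True
    then show ?thesis using ij nth \<open>\<sigma> j < length L\<close> precedes_nth by fastforce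
  next
    case False
    then have "i = k \<and> j = Suc k" using ij(1) by (auto simp: \<sigma>_def split: if_splits)
    then show ?thesis using ij nth by (simp add: \<sigma>_def)
  qed
qed

definition inversions :: "'a list \<Rightarrow> 'a list \<Rightarrow> ('a \<times> 'a) set" where
  "inversions L0 L = {(u, v). precedes L0 u v \<and> precedes L v u}"

lemma finite_inversions: "finite (inversions L0 L)"
proof (rule finite_subset)
  show "inversions L0 L \<subseteq> set L0 \<times> set L0"
    by (auto simp: inversions_def precedes_def)
qed simp

lemma inversions_self: "distinct L \<Longrightarrow> inversions L L = {}"
  by (auto simp: inversions_def dest: precedes_asym)

lemma card_inversions_swap_adj_le:
  assumes "Suc k < length L"
  shows "card (inversions L0 (swap_adj L k)) \<le> card (inversions L0 L) + 1"
proof -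
  have "inversions L0 (swap_adj L k) \<subseteq> insert (L ! k, L ! Suc k) (inversions L0 L)"
    using precedes_swap_adj[OF assms] by (auto simp: inversions_def)
  then have "card (inversions L0 (swap_adj L k)) \<le> card (insert (L ! k, L ! Suc k) (inversions L0 L))"
    by (simp add: card_mono finite_inversions)
  also have "\<dots> \<le> card (inversions L0 L) + 1"
    by (simp add: finite_inversions card_insert_if)
  finally show ?thesis .
qed

text \<open>If \<open>L0 ! j\<close> overtakes \<open>L0 ! i\<close>, every entry strictly between them in \<open>L0\<close> is inverted
  with one of the two, according to whether it ends up before or after \<open>L0 ! i\<close>.\<close>
lemma card_inversions_ge:
  assumes d0: "distinct L0" and d: "distinct L" and same: "set L = set L0"
    and ij: "i < j" "j < length L0" and overtake: "precedes L (L0 ! j) (L0 ! i)"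
  shows "j - i \<le> card (inversions L0 L)"
proof -
  define x y where "x = L0 ! j" and "y = L0 ! i"
  define g where "g t = (if t = j then (y, x) else if precedes L (L0 ! t) y then (y, L0 ! t)
    else (L0 ! t, x))" for t
  have g_inv: "g t \<in> inversions L0 L" if t: "i < t" "t \<le> j" for t
  proof (cases "t = j")
    case True
    then show ?thesis using ij overtake precedes_nth by (fastforce simp: g_def inversions_def x_def y_def)
  next
    case False
    then have tj: "t < j" using t by simp
    have "precedes L0 y (L0 ! t)" "precedes L0 (L0 ! t) x"
      using t tj ij unfolding x_def y_def by (auto intro: precedes_nth)
    moreover have "precedes L (L0 ! t) y \<or> precedes L x (L0 ! t)"
    proof -
      have "L0 ! t \<noteq> y" using d0 t ij unfolding y_def by (simp add: nth_eq_iff_index_eq)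
      moreover have "L0 ! t \<in> set L" "y \<in> set L" using same t ij y_def by auto
      ultimately show ?thesis
        using precedes_total precedes_trans[OF d] overtake x_def y_def by metis
    qed
    ultimately show ?thesis using False by (auto simp: g_def inversions_def)
  qed
  have "inj_on g {i<..j}"
  proof (rule inj_onI)
    fix s t assume s: "s \<in> {i<..j}" and t: "t \<in> {i<..j}" and eq: "g s = g t"
    have ne: "L0 ! u \<noteq> L0 ! v" if "u \<noteq> v" "u < length L0" "v < length L0" for u v
      using that d0 by (simp add: nth_eq_iff_index_eq)
    show "s = t"
      using eq s t ij ne[of s t] ne[of i s] ne[of i t] ne[of s j] ne[of t j]
      unfolding g_def x_def y_def by (auto split: if_splits)
  qed
  then have "card (g ` {i<..j}) = j - i" by (simp add: card_image)
  moreover have "g ` {i<..j} \<subseteq> inversions L0 L" using g_inv by auto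
  ultimately show ?thesis using card_mono[OF finite_inversions] by metis
qed

lemma length_apply_swaps: "length (apply_swaps P S a) = length (P a)"
  by (induction S rule: rev_induct)
    (auto simp: apply_swaps_def apply_swap_def swap_adj_def split: prod.split)

lemma apply_swaps_snoc:
  "apply_swaps P (S @ [(b, k)]) = (apply_swaps P S)(b := swap_adj (apply_swaps P S b) k)"
  by (simp add: apply_swaps_def apply_swap_def)

lemma apply_swaps_inversions_le_count:
  assumes "valid_swaps U W P S" and "distinct (P a)"
  shows "distinct (apply_swaps P S a) \<and> set (apply_swaps P S a) = set (P a) \<and>
    card (inversions (P a) (apply_swaps P S a)) \<le> count_list (map fst S) a"
  using assms(1)
proof (induction S rule: rev_induct)
  case Nil
  then show ?case using assms(2) by (simp add: apply_swaps_def inversions_self)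
next
  case (snoc s S)
  obtain b k where s: "s = (b, k)" by (cases s)
  define Q where "Q = apply_swaps P S"
  have IH: "distinct (Q a) \<and> set (Q a) = set (P a) \<and>
      card (inversions (P a) (Q a)) \<le> count_list (map fst S) a"
    using snoc by (simp add: Q_def valid_swaps_def)
  show ?case
  proof (cases "b = a")
    case True
    have "Suc k < length (Q a)"
      using snoc.prems True s by (simp add: Q_def length_apply_swaps valid_swaps_def)
    then show ?thesis
      using IH card_inversions_swap_adj_le[of k "Q a" "P a"] True
      by (simp add: s apply_swaps_snoc Q_def[symmetric] swap_adj_def)
  next
    case False
    then show ?thesis using IH by (simp add: s apply_swaps_snoc Q_def[symmetric])
  qed
qed

lemma sum_count_list_le_length:
  assumes "finite A"
  shows "(\<Sum>a\<in>A. count_list xs a) \<le> length xs"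
proof -
  have "(\<Sum>a\<in>A. count_list xs a) \<le> (\<Sum>a\<in>A \<union> set xs. count_list xs a)"
    using assms by (intro sum_mono2) auto
  also have "\<dots> = length xs" using assms by (intro sum_count_set) auto
  finally show ?thesis .
qed

lemma sm_instance_swap_sides: "sm_instance U W P \<Longrightarrow> sm_instance W U P"
  unfolding sm_instance_def by auto

lemma valid_swaps_swap_sides: "valid_swaps U W P S \<Longrightarrow> valid_swaps W U P S"
  unfolding valid_swaps_def by auto

lemma stable_swap_sides: "stable U W Q M \<Longrightarrow> stable W U Q (M\<inverse>)"
  unfolding stable_def matching_def blocks_def by blast

lemma stable_pair_not_matched:
  assumes M: "stable U W Q M" and mw: "m \<in> U" "w \<in> W" "(m, w) \<notin> M"
    and complete: "set (Q m) = W" "set (Q w) = U"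
  shows "(\<exists>w'. (m, w') \<in> M \<and> prefers Q m w' w) \<or> (\<exists>m'. (m', w) \<in> M \<and> prefers Q w m' m)"
proof (rule ccontr)
  assume none: "\<not> ?thesis"
  have "M \<subseteq> U \<times> W" using M by (simp add: stable_def matching_def)
  then have "blocks Q M m w"
    using none mw complete precedes_total[of w "Q m"] precedes_total[of m "Q w"]
    unfolding blocks_def prefers_iff_precedes by blast
  then show False using M mw by (auto simp: stable_def)
qed

lemma mod_add_shift_neq:
  fixes b k r :: nat
  assumes "b < r" "0 < k" "k < r"
  shows "(b + k) mod r \<noteq> b"
  using assms by (cases "b + k < r") (simp_all add: le_mod_geq)

lemma mod_add_shift_back:
  fixes b k r :: nat
  assumes "b < r" "k \<le> r"
  shows "((b + k) mod r + (r - k)) mod r = b"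
proof -
  have "((b + k) mod r + (r - k)) mod r = (b + k + (r - k)) mod r" by (simp add: mod_add_left_eq)
  also have "\<dots> = b" using assms by simp
  finally show ?thesis .
qed

text \<open>Summing \<open>b + k b = f b + r * ((b + k b) div r)\<close> over \<open>B\<close>, the terms \<open>b\<close> and \<open>f b\<close> cancel
  because \<open>f\<close> permutes \<open>B\<close>; so the positive total shift is a multiple of \<open>r\<close>.\<close>
lemma modulus_le_sum_cyclic_shifts:
  fixes f k :: "nat \<Rightarrow> nat"
  assumes B: "finite B" "B \<noteq> {}" and f: "f ` B \<subseteq> B" "inj_on f B"
    and shift: "\<And>b. b \<in> B \<Longrightarrow> f b = (b + k b) mod r" and pos: "\<And>b. b \<in> B \<Longrightarrow> 0 < k b"
  shows "r \<le> (\<Sum>b\<in>B. k b)"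
proof -
  have "(\<Sum>b\<in>B. f b) = (\<Sum>b\<in>B. b)"
    using sum.reindex[OF f(2), of id] endo_inj_surj[OF B(1) f] by simp
  moreover have "(\<Sum>b\<in>B. b + k b) = (\<Sum>b\<in>B. f b + r * ((b + k b) div r))"
    using shift by (intro sum.cong) (simp_all add: mod_mult_div_eq)
  ultimately have multiple: "(\<Sum>b\<in>B. k b) = r * (\<Sum>b\<in>B. (b + k b) div r)"
    by (simp add: sum.distrib sum_distrib_left)
  have "0 < (\<Sum>b\<in>B. k b)" using B pos by (simp add: sum_pos)
  then show ?thesis unfolding multiple by (cases "(\<Sum>b\<in>B. (b + k b) div r)") auto
qed

lemma take_eq_map_upt:
  assumes "take r L = map g [0..<r]"
  shows "r \<le> length L" and "j < r \<Longrightarrow> L ! j = g j"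
proof -
  have "length (take r L) = r" using assms by simp
  then show "r \<le> length L" by simp
  show "L ! j = g j" if "j < r" using that nth_take[OF that, of L] assms by simp
qed

locale cyclic_dummies =
  fixes U W :: "'a set" and P :: "'a prefs" and r :: nat
    and md wd :: "nat \<Rightarrow> 'a" and S :: "('a \<times> nat) list" and M :: "('a \<times> 'a) set"
  assumes inst: "sm_instance U W P"
    and md: "inj_on md {..<r}" "md ` {..<r} \<subseteq> U"
    and wd: "inj_on wd {..<r}" "wd ` {..<r} \<subseteq> W"
    and pm: "\<forall>i<r. take r (P (md i)) = map (\<lambda>j. wd ((i + j) mod r)) [0..<r]"
    and pw: "\<forall>i<r. take r (P (wd i)) = map (\<lambda>j. md ((i + j) mod r)) [0..<r]"
    and S: "length S \<le> r - 1" "valid_swaps U W P S"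
    and M: "stable U W (apply_swaps P S) M"
begin

abbreviation Q :: "'a prefs" where "Q \<equiv> apply_swaps P S"

abbreviation swaps_of :: "'a \<Rightarrow> nat" where "swaps_of a \<equiv> count_list (map fst S) a"

lemma swapped_sides: "cyclic_dummies W U P r wd md S (M\<inverse>)"
proof
  show "sm_instance W U P" using inst by (rule sm_instance_swap_sides)
  show "valid_swaps W U P S" using S(2) by (rule valid_swaps_swap_sides)
  show "stable W U Q (M\<inverse>)" using M by (rule stable_swap_sides)
qed (use md wd pm pw S in auto)

lemma md_in_U: "i < r \<Longrightarrow> md i \<in> U" and wd_in_W: "i < r \<Longrightarrow> wd i \<in> W"
  using md wd by auto

lemma nth_P_md: "i < r \<Longrightarrow> j < r \<Longrightarrow> P (md i) ! j = wd ((i + j) mod r)"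
  and nth_P_wd: "i < r \<Longrightarrow> j < r \<Longrightarrow> P (wd i) ! j = md ((i + j) mod r)"
  using pm pw by (metis take_eq_map_upt(2))+

lemma length_P_wd: "i < r \<Longrightarrow> r \<le> length (P (wd i))"
  using pw by (metis take_eq_map_upt(1))

lemma set_P_man: "m \<in> U \<Longrightarrow> set (P m) = W"
  and set_P_woman: "w \<in> W \<Longrightarrow> set (P w) = U"
  using inst by (auto simp: sm_instance_def)

lemma distinct_Q: "a \<in> U \<union> W \<Longrightarrow> distinct (Q a)"
  and set_Q: "a \<in> U \<union> W \<Longrightarrow> set (Q a) = set (P a)"
  and card_inversions_Q: "a \<in> U \<union> W \<Longrightarrow> card (inversions (P a) (Q a)) \<le> swaps_of a"
  using inst apply_swaps_inversions_le_count[OF S(2), of a] by (auto simp: sm_instance_def)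

lemma overtaking_needs_swaps:
  assumes a: "a \<in> U \<union> W" and j: "j < length (P a)"
    and overtake: "precedes (Q a) (P a ! j) (P a ! 0)"
  shows "j \<le> swaps_of a"
proof (cases "j = 0")
  case False
  have "distinct (P a)" using inst a by (auto simp: sm_instance_def)
  then have "j - 0 \<le> card (inversions (P a) (Q a))"
    using False j overtake distinct_Q[OF a] set_Q[OF a] by (intro card_inversions_ge) auto
  then show ?thesis using card_inversions_Q[OF a] by simp
qed simp

lemma length_S_less: "0 < r \<Longrightarrow> length S < r"
  using S(1) by simp

lemma swaps_of_two_le: "a \<noteq> a' \<Longrightarrow> swaps_of a + swaps_of a' \<le> length S"
  using sum_count_list_le_length[of "{a, a'}" "map fst S"] by simp

lemma better_partner_shift:
  assumes b: "b < r" and better: "prefers Q (md b) p (wd b)"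
  obtains k where "0 < k" "k < r" "k \<le> swaps_of (md b)" "p = wd ((b + k) mod r)"
proof -
  have mb: "md b \<in> U" using md_in_U[OF b] .
  have "p \<in> set (P (md b))"
    using better precedes_in_set set_Q mb by (metis UnI1 prefers_iff_precedes)
  then obtain k where k: "k < length (P (md b))" "P (md b) ! k = p" by (auto simp: in_set_conv_nth)
  have top: "P (md b) ! 0 = wd b" using nth_P_md[OF b, of 0] b by simp
  have "k \<le> swaps_of (md b)"
    using overtaking_needs_swaps[of "md b" k] mb k top better by (simp add: prefers_iff_precedes)
  moreover have "k \<noteq> 0"
    using k top better precedes_irrefl[OF distinct_Q] mb by (metis UnI1 prefers_iff_precedes)
  moreover have "k < r"
    using calculation(1) count_le_length[of "map fst S" "md b"] length_S_less b by simp
  ultimately show ?thesis using that k nth_P_md[OF b] by simp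
qed

lemma rival_better_off:
  assumes b: "b < r" and k: "0 < k" "k < r" "k \<le> swaps_of (md b)"
    and a: "a = (b + k) mod r" and matched: "(md b, wd a) \<in> M"
  shows "\<exists>w. (md a, w) \<in> M \<and> prefers Q (md a) w (wd a)"
proof (rule ccontr)
  assume not_better: "\<not> ?thesis"
  have ar: "a < r" using a b by simp
  have "md a \<noteq> md b" using mod_add_shift_neq[OF b k(1,2)] a ar b inj_onD[OF md(1)] by auto
  then have "(md a, wd a) \<notin> M" using matched M by (auto simp: stable_def matching_def)
  then obtain m where m: "(m, wd a) \<in> M" "prefers Q (wd a) m (md a)"
    using stable_pair_not_matched[OF M md_in_U[OF ar] wd_in_W[OF ar]] not_better
      set_Q set_P_man set_P_woman md_in_U[OF ar] wd_in_W[OF ar] by auto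
  have "m = md b" using m(1) matched M by (auto simp: stable_def matching_def)
  have "P (wd a) ! (r - k) = md b"
    using nth_P_wd[OF ar, of "r - k"] mod_add_shift_back[OF b, of k] k a by simp
  moreover have "P (wd a) ! 0 = md a" using nth_P_wd[OF ar, of 0] ar by simp
  ultimately have "r - k \<le> swaps_of (wd a)"
    using overtaking_needs_swaps[of "wd a" "r - k"] wd_in_W[OF ar] length_P_wd[OF ar] k m(2)
      \<open>m = md b\<close> by (simp add: prefers_iff_precedes)
  moreover have "md b \<noteq> wd a"
    using inst md_in_U[OF b] wd_in_W[OF ar] by (auto simp: sm_instance_def)
  then have "swaps_of (md b) + swaps_of (wd a) \<le> length S" by (rule swaps_of_two_le)
  ultimately show False using k(3) length_S_less b by linarith
qed

lemma dummy_man_not_better_off: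
  assumes i: "i < r" and matched: "(md i, p) \<in> M"
  shows "\<not> prefers Q (md i) p (wd i)"
proof -
  define B where "B = {b. b < r \<and> (\<exists>p. (md b, p) \<in> M \<and> prefers Q (md b) p (wd b))}"
  have "B = {}"
  proof (rule ccontr)
    assume "B \<noteq> {}"
    then have r: "0 < r" by (auto simp: B_def)
    have "\<exists>k. 0 < k \<and> k < r \<and> k \<le> swaps_of (md b) \<and> (md b, wd ((b + k) mod r)) \<in> M"
      if bB: "b \<in> B" for b
    proof -
      obtain p where "b < r" "(md b, p) \<in> M" "prefers Q (md b) p (wd b)"
        using bB by (auto simp: B_def)
      then show ?thesis by (metis better_partner_shift)
    qed
    then obtain k where k: "\<And>b. b \<in> B \<Longrightarrow> 0 < k b \<and> k b < r \<and> k b \<le> swaps_of (md b) \<and>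
        (md b, wd ((b + k b) mod r)) \<in> M" by metis
    define f where "f b = (b + k b) mod r" for b
    have "f b \<in> B" if "b \<in> B" for b
    proof -
      have "b < r" using that by (simp add: B_def)
      then show ?thesis
        using rival_better_off[OF \<open>b < r\<close>, of "k b" "f b"] k[OF that] by (simp add: B_def f_def)
    qed
    then have "f ` B \<subseteq> B" by blast
    moreover have "inj_on f B"
    proof (rule inj_onI)
      fix b b' assume "b \<in> B" "b' \<in> B" "f b = f b'"
      then have "md b = md b'"
        using k[of b] k[of b'] M by (auto simp: f_def stable_def matching_def)
      then show "b = b'" using \<open>b \<in> B\<close> \<open>b' \<in> B\<close> inj_onD[OF md(1)] by (auto simp: B_def)
    qed
    moreover have "finite B" by (simp add: B_def)
    ultimately have "r \<le> (\<Sum>b\<in>B. k b)"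
      using \<open>B \<noteq> {}\<close> k by (intro modulus_le_sum_cyclic_shifts[where f = f]) (simp_all add: f_def)
    also have "\<dots> \<le> (\<Sum>b\<in>B. swaps_of (md b))" using k by (intro sum_mono) simp
    also have "\<dots> = (\<Sum>a\<in>md ` B. swaps_of a)"
      using inj_on_subset[OF md(1), of B] by (intro sum.reindex_cong[symmetric]) (auto simp: B_def)
    also have "\<dots> \<le> length S"
      using sum_count_list_le_length[of "md ` B" "map fst S"] \<open>finite B\<close> by simp
    finally show False using length_S_less[OF r] by simp
  qed
  then show ?thesis using i matched by (auto simp: B_def)
qed

lemma dummy_woman_not_better_off: "i < r \<Longrightarrow> (p, wd i) \<in> M \<Longrightarrow> \<not> prefers Q (wd i) p (md i)"
  using cyclic_dummies.dummy_man_not_better_off[OF swapped_sides] by auto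

lemma dummy_pair_matched:
  assumes i: "i < r"
  shows "(md i, wd i) \<in> M"
proof (rule ccontr)
  assume "(md i, wd i) \<notin> M"
  then show False
    using stable_pair_not_matched[OF M md_in_U[OF i] wd_in_W[OF i]]
      dummy_man_not_better_off[OF i] dummy_woman_not_better_off[OF i]
      set_Q set_P_man set_P_woman md_in_U[OF i] wd_in_W[OF i] by auto
qed

end

theorem mainTheorem4:
  fixes U W :: "'a set" and P :: "'a prefs" and r :: nat
    and md wd :: "nat \<Rightarrow> 'a" and S :: "('a \<times> nat) list" and M :: "('a \<times> 'a) set"
  assumes inst: "sm_instance U W P"
    and md: "inj_on md {..<r}" "md ` {..<r} \<subseteq> U"
    and wd: "inj_on wd {..<r}" "wd ` {..<r} \<subseteq> W"
    and pm: "\<forall>i<r. take r (P (md i)) = map (\<lambda>j. wd ((i + j) mod r)) [0..<r]"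
    and pw: "\<forall>i<r. take r (P (wd i)) = map (\<lambda>j. md ((i + j) mod r)) [0..<r]"
    and S: "length S \<le> r - 1" "valid_swaps U W P S"
    and M: "stable U W (apply_swaps P S) M"
  shows "\<forall>i<r. (md i, wd i) \<in> M"
proof -
  interpret cyclic_dummies U W P r md wd S M
    using assms by unfold_locales
  show ?thesis using dummy_pair_matched by blast
qed

end
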